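(* If $X$ has mean zero, variance one, and a density $p$ with finite Fisher information, then $$\|p-\varphi\|_{TV}\le 4\sqrt{I(X\|Z)},$$ where $\varphi$ is the standard normal density and $Z\sim N(0,1)$.
   Context: Fisher information: for $X$ with absolutely continuous density $p$, $I(X)=\int_{\{p>0\}}p'^2/p\,dx$. $I(X\|Z)=I(X)-I(Z)=I(X)-1=\int(p'/p+x)^2p\,dx$. For an absolutely continuous integrable $u$, $\|u\|_{TV}=\int|u'(x)|\,dx$. *)

theory Defs
  imports "HOL-Probability.Probability"
begin

text \<open>Local absolute continuity on the real line, with a.e. derivative u':
  u' is integrable on every compact interval and u is its indefinite integral
  (Lebesgue's fundamental theorem of calculus characterisation).\<close>
definition ac_with_deriv :: "(real \<Rightarrow> real) \<Rightarrow> (real \<Rightarrow> real) \<Rightarrow> bool" where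
  "ac_with_deriv u u' \<longleftrightarrow>
     (\<forall>a b. set_integrable lborel {a..b} u') \<and>
     (\<forall>a b. a \<le> b \<longrightarrow> u b - u a = (LINT t:{a..b}|lborel. u' t))"

definition fisher_info :: "(real \<Rightarrow> real) \<Rightarrow> (real \<Rightarrow> real) \<Rightarrow> real" where
  "fisher_info p p' = (LINT x:{x. p x > 0}|lborel. (p' x)\<^sup>2 / p x)"

definition finite_fisher_info :: "(real \<Rightarrow> real) \<Rightarrow> (real \<Rightarrow> real) \<Rightarrow> bool" where
  "finite_fisher_info p p' \<longleftrightarrow> set_integrable lborel {x. p x > 0} (\<lambda>x. (p' x)\<^sup>2 / p x)"

text \<open>Total variation norm of an absolutely continuous integrable u with derivative u':
  the integral of |u'|; finiteness is expressed by integrability of u'.\<close>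
definition tv_norm :: "(real \<Rightarrow> real) \<Rightarrow> real" where
  "tv_norm u' = (LINT x|lborel. \<bar>u' x\<bar>)"

definition std_normal_density' :: "real \<Rightarrow> real" where
  "std_normal_density' x = - x * std_normal_density x"

end

theory Submission
  imports Defs
begin

(* The inequality  int |p' - phi'| <= 4 sqrt (I(X||Z))  by Stein's method, where phi is the standard
   normal density and w = p' + x p, so that I(X||Z) = I(X) - 1 = int w^2/p.
   1. Calculus for locally absolutely continuous functions (ac_with_deriv): product and chain rules,
      derived from a local-estimate criterion, and int u' = 0 when u and u' are integrable.
   2. Finite Fisher information forces p' = 0 a.e. on {p = 0} (compare sqrt p with sqrt (p + e)).
      Consequently p' and x p' are integrable, int x p' = -1, int w^2/p = I(X) - 1, and a weighted
      Cauchy-Schwarz inequality gives int |w| <= sqrt (I(X) - 1).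
   3. Stein's method: with s = sgn (p' + x phi), the test function k = x s - E[Z s Z] is centred under
      phi and grows at most like |x| + 1, so the Stein solution G = (int_x^oo k phi)/phi satisfies
      G' = x G - k and |G| <= 3 (Gaussian tail bounds).  Integrating (p G)' gives int k p = int w G,
      whence int |p' + x phi| = int s w - int w G <= 4 int |w|. *)

lemma set_integrable_mult_bounded:
  fixes f h :: "real \<Rightarrow> real"
  assumes f: "set_integrable lborel S f" and h: "h \<in> borel_measurable lborel"
    and bound: "\<And>x. x \<in> S \<Longrightarrow> \<bar>h x\<bar> \<le> B"
  shows "set_integrable lborel S (\<lambda>x. f x * h x)"
proof (rule set_integrable_bound[where f="\<lambda>x. B * f x"])
  show "set_integrable lborel S (\<lambda>x. B * f x)" using f by (rule set_integrable_mult_right)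
  have "(\<lambda>x. indicator S x *\<^sub>R f x) \<in> borel_measurable lborel"
    using f unfolding set_integrable_def by (rule borel_measurable_integrable)
  then have "(\<lambda>x. (indicator S x *\<^sub>R f x) * h x) \<in> borel_measurable lborel"
    using h by measurable
  then show "set_borel_measurable lborel S (\<lambda>x. f x * h x)"
    unfolding set_borel_measurable_def by (simp add: mult.assoc)
  show "AE x\<in>S in lborel. norm (f x * h x) \<le> norm (B * f x)"
  proof (rule AE_I2, rule impI)
    fix x assume "x \<in> S"
    then have "\<bar>h x\<bar> \<le> \<bar>B\<bar>" using bound by (meson abs_ge_self order_trans)
    then show "norm (f x * h x) \<le> norm (B * f x)"
      by (simp add: abs_mult) (metis abs_ge_zero mult.commute mult_left_mono)
  qed
qed

lemma locally_integrable_measurable: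
  fixes f :: "real \<Rightarrow> real"
  assumes "\<And>a b. set_integrable lborel {a..b} f"
  shows "f \<in> borel_measurable lborel"
proof (rule borel_measurable_LIMSEQ_real)
  show "(\<lambda>n. indicator {-real n..real n} x * f x) \<longlonglongrightarrow> f x" for x
  proof (rule tendsto_eventually)
    obtain N :: nat where "\<bar>x\<bar> \<le> real N" using real_arch_simple by blast
    then show "\<forall>\<^sub>F n in sequentially. indicator {-real n..real n} x * f x = f x"
      unfolding eventually_sequentially by (intro exI[of _ N]) (auto simp: indicator_def)
  qed
  show "(\<lambda>x. indicator {-real n..real n} x * f x) \<in> borel_measurable lborel" for n
    using assms[of "-real n" "real n"] unfolding set_integrable_def
    by (simp add: borel_measurable_integrable mult.commute)
qed

lemma locally_integrable_HK:
  fixes f :: "real \<Rightarrow> real"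
  assumes "\<And>a b. set_integrable lborel {a..b} f"
  shows "f integrable_on {a..b}" "(\<lambda>x. \<bar>f x\<bar>) integrable_on {a..b}"
    "(LINT t:{a..b}|lborel. f t) = integral {a..b} f"
  using set_borel_integral_eq_integral[OF assms] set_borel_integral_eq_integral[OF set_integrable_abs[OF assms]]
  by auto

lemma set_integrable_of_integrable:
  fixes f :: "real \<Rightarrow> real"
  shows "integrable lborel f \<Longrightarrow> A \<in> sets borel \<Longrightarrow> set_integrable lborel A f"
  unfolding set_integrable_def by (rule integrable_mult_indicator) auto

lemma ac_with_deriv_integrable: "ac_with_deriv u u' \<Longrightarrow> set_integrable lborel {a..b} u'"
  unfolding ac_with_deriv_def by blast

lemma ac_with_deriv_increment:
  "ac_with_deriv u u' \<Longrightarrow> a \<le> b \<Longrightarrow> u b - u a = (LINT t:{a..b}|lborel. u' t)"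
  unfolding ac_with_deriv_def by blast

lemma ac_with_deriv_measurable: "ac_with_deriv u u' \<Longrightarrow> u' \<in> borel_measurable lborel"
  by (rule locally_integrable_measurable) (rule ac_with_deriv_integrable)

lemma ac_with_deriv_HK:
  assumes "ac_with_deriv u u'" "a \<le> b"
  shows "u b - u a = integral {a..b} u'"
  using locally_integrable_HK(3)[OF ac_with_deriv_integrable[OF assms(1)]]
    ac_with_deriv_increment[OF assms] by simp

lemma ac_with_deriv_continuous:
  assumes u: "ac_with_deriv u u'"
  shows "continuous_on S u"
proof -
  have "isCont u x" for x
  proof -
    have i: "u' integrable_on {x - 1..x + 1}"
      using locally_integrable_HK(1)[OF ac_with_deriv_integrable[OF u]] .
    have "continuous_on {x - 1..x + 1} (\<lambda>t. u (x - 1) + integral {x - 1..t} u')"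
      by (intro continuous_intros indefinite_integral_continuous_1 i)
    then have "continuous_on {x - 1..x + 1} u"
      by (rule continuous_on_eq) (use ac_with_deriv_HK[OF u] in force)
    then show ?thesis by (rule continuous_on_interior) simp
  qed
  then show ?thesis by (simp add: continuous_at_imp_continuous_on)
qed

lemma ac_with_deriv_cong:
  assumes "ac_with_deriv u u'" "\<And>x. u x = v x" "\<And>x. u' x = v' x"
  shows "ac_with_deriv v v'"
proof -
  have "u = v" "u' = v'" using assms(2,3) by auto
  then show ?thesis using assms(1) by simp
qed

lemma ac_with_deriv_add:
  assumes "ac_with_deriv u u'" "ac_with_deriv v v'"
  shows "ac_with_deriv (\<lambda>x. u x + v x) (\<lambda>x. u' x + v' x)"
  using assms unfolding ac_with_deriv_def
  by (auto simp: set_integral_add(2) algebra_simps intro!: set_integral_add(1))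

lemma ac_with_deriv_diff:
  assumes "ac_with_deriv u u'" "ac_with_deriv v v'"
  shows "ac_with_deriv (\<lambda>x. u x - v x) (\<lambda>x. u' x - v' x)"
  using assms unfolding ac_with_deriv_def
  by (auto simp: set_integral_diff(2) algebra_simps intro!: set_integral_diff(1))

lemma ac_with_deriv_cmult:
  assumes "ac_with_deriv u u'"
  shows "ac_with_deriv (\<lambda>x. c * u x) (\<lambda>x. c * u' x)"
  using assms unfolding ac_with_deriv_def
  by (auto simp: set_integral_mult_right right_diff_distrib[symmetric] intro!: set_integrable_mult_right)

lemma ac_with_deriv_C1:
  assumes d: "\<And>x. (g has_real_derivative g' x) (at x)" and c: "continuous_on UNIV g'"
  shows "ac_with_deriv g g'"
  unfolding ac_with_deriv_def
proof (intro conjI allI impI)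
  fix a b :: real
  show "set_integrable lborel {a..b} g'"
    by (rule borel_integrable_atLeastAtMost'[OF continuous_on_subset[OF c]]) simp
  assume ab: "a \<le> b"
  have "integral\<^sup>L lborel (\<lambda>x. indicator {a .. b} x *\<^sub>R g' x) = g b - g a"
  proof (rule integral_FTC_atLeastAtMost[OF ab])
    show "(g has_vector_derivative g' x) (at x within {a..b})" for x
      using has_field_derivative_at_within[OF d] by (simp add: has_real_derivative_iff_has_vector_derivative)
    show "continuous_on {a..b} g'" by (rule continuous_on_subset[OF c]) simp
  qed
  then show "g b - g a = (LINT t:{a..b}|lborel. g' t)"
    by (simp add: set_lebesgue_integral_def)
qed

(* If for every e > 0 all sufficiently short increments of Phi on [a, b] are bounded by e times the
   increments of V, then Phi b = Phi a: sum the bounds over a fine uniform partition and let e -> 0. *)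
lemma constant_of_local_increment_bound:
  fixes \<Phi> V :: "real \<Rightarrow> real"
  assumes ab: "a \<le> b"
    and loc: "\<And>e. e > 0 \<Longrightarrow> \<exists>\<delta>>0. \<forall>x y. a \<le> x \<longrightarrow> x \<le> y \<longrightarrow> y \<le> b \<longrightarrow> y - x < \<delta> \<longrightarrow>
                 \<bar>\<Phi> y - \<Phi> x\<bar> \<le> e * (V y - V x)"
  shows "\<Phi> b = \<Phi> a"
proof -
  define C where "C = V b - V a"
  have bound: "\<bar>\<Phi> b - \<Phi> a\<bar> \<le> e * C" if e: "e > 0" for e
  proof -
    obtain \<delta> where \<delta>: "\<delta> > 0" and step: "\<And>x y. a \<le> x \<Longrightarrow> x \<le> y \<Longrightarrow> y \<le> b \<Longrightarrow> y - x < \<delta> \<Longrightarrow>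
        \<bar>\<Phi> y - \<Phi> x\<bar> \<le> e * (V y - V x)" using loc[OF e] by blast
    obtain n :: nat where n: "(b - a) / \<delta> < real n" using reals_Archimedean2 by blast
    then have "n > 0" using ab \<delta> by (metis divide_nonneg_pos gr_zeroI not_less of_nat_0 diff_ge_0_iff_ge)
    define h where "h = (b - a) / n"
    have h: "h \<ge> 0" "h < \<delta>" "a + real n * h = b"
      using ab n \<delta> \<open>n > 0\<close> by (simp_all add: h_def field_simps)
    have "\<bar>\<Phi> (a + real j * h) - \<Phi> a\<bar> \<le> e * (V (a + real j * h) - V a)" if "j \<le> n" for j
      using that
    proof (induction j)
      case (Suc j)
      let ?x = "a + real j * h" and ?y = "a + real (Suc j) * h"
      have "real (Suc j) * h \<le> real n * h" using Suc.prems h by (intro mult_right_mono) auto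
      then have "\<bar>\<Phi> ?y - \<Phi> ?x\<bar> \<le> e * (V ?y - V ?x)"
        using h by (intro step) (auto simp: algebra_simps)
      then show ?case using Suc by (simp add: abs_le_iff algebra_simps)
    qed simp
    from this[of n] show ?thesis by (simp add: h C_def)
  qed
  show ?thesis
  proof (cases "C > 0")
    case True
    have "\<bar>\<Phi> b - \<Phi> a\<bar> \<le> 0"
    proof (rule field_le_epsilon)
      fix e :: real assume "e > 0"
      then show "\<bar>\<Phi> b - \<Phi> a\<bar> \<le> 0 + e" using bound[of "e / C"] True by simp
    qed
    then show ?thesis by simp
  next
    case False
    then show ?thesis using bound[of 1] by simp
  qed
qed

lemma ac_with_deriv_of_local_estimate:
  fixes f w g :: "real \<Rightarrow> real"
  assumes w: "\<And>a b. set_integrable lborel {a..b} w"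
    and g: "\<And>a b. set_integrable lborel {a..b} g"
    and est: "\<And>a b e. e > 0 \<Longrightarrow> \<exists>\<delta>>0. \<forall>x y. a \<le> x \<longrightarrow> x \<le> y \<longrightarrow> y \<le> b \<longrightarrow> y - x < \<delta> \<longrightarrow>
                \<bar>f y - f x - integral {x..y} w\<bar> \<le> e * integral {x..y} (\<lambda>t. \<bar>g t\<bar>)"
  shows "ac_with_deriv f w"
proof -
  note HKw = locally_integrable_HK[OF w] and HKg = locally_integrable_HK[OF g]
  have "f b - f a = integral {a..b} w" if ab: "a \<le> b" for a b
  proof -
    define \<Phi> where "\<Phi> t = f t - integral {a..t} w" for t
    define V where "V t = integral {a..t} (\<lambda>t. \<bar>g t\<bar>)" for t
    have "\<Phi> b = \<Phi> a"
    proof (rule constant_of_local_increment_bound[OF ab, where V=V])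
      fix e :: real assume "e > 0"
      then obtain \<delta> where "\<delta> > 0" and \<delta>: "\<forall>x y. a \<le> x \<longrightarrow> x \<le> y \<longrightarrow> y \<le> b \<longrightarrow> y - x < \<delta> \<longrightarrow>
          \<bar>f y - f x - integral {x..y} w\<bar> \<le> e * integral {x..y} (\<lambda>t. \<bar>g t\<bar>)"
        using est by blast
      have "\<Phi> y - \<Phi> x = f y - f x - integral {x..y} w" "V y - V x = integral {x..y} (\<lambda>t. \<bar>g t\<bar>)"
        if "a \<le> x" "x \<le> y" for x y
        using Henstock_Kurzweil_Integration.integral_combine[OF that HKw(1)]
          Henstock_Kurzweil_Integration.integral_combine[OF that HKg(2)]
        by (simp_all add: \<Phi>_def V_def)
      with \<open>\<delta> > 0\<close> \<delta> show "\<exists>\<delta>>0. \<forall>x y. a \<le> x \<longrightarrow> x \<le> y \<longrightarrow> y \<le> b \<longrightarrow> y - x < \<delta> \<longrightarrow>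
          \<bar>\<Phi> y - \<Phi> x\<bar> \<le> e * (V y - V x)" by auto
    qed
    then show ?thesis by (simp add: \<Phi>_def)
  qed
  then show ?thesis unfolding ac_with_deriv_def using w HKw(3) by auto
qed

lemma mean_value_between:
  fixes F F' :: "real \<Rightarrow> real"
  assumes "\<And>y. min p q \<le> y \<Longrightarrow> y \<le> max p q \<Longrightarrow> (F has_real_derivative F' y) (at y)"
  shows "\<exists>\<xi>. min p q \<le> \<xi> \<and> \<xi> \<le> max p q \<and> F q - F p = (q - p) * F' \<xi>"
proof -
  have mvt: "\<exists>\<xi>\<in>{r..s}. F s - F r = (s - r) * F' \<xi>"
    if rs: "r \<le> s" and der: "\<And>y. r \<le> y \<Longrightarrow> y \<le> s \<Longrightarrow> (F has_real_derivative F' y) (at y)" for r s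
  proof -
    have "(F has_derivative (\<lambda>h. F' y * h)) (at y within {r..s})" if "r \<le> y" "y \<le> s" for y
      using der[OF that] by (simp add: has_field_derivative_def has_derivative_at_withinI)
    then show ?thesis using mvt_very_simple[OF rs, of F "\<lambda>y h. F' y * h"] by (auto simp: mult.commute)
  qed
  show ?thesis
  proof (cases "p \<le> q")
    case True
    then show ?thesis using mvt[of p q] assms by auto
  next
    case False
    then obtain \<xi> where "\<xi> \<in> {q..p}" "F p - F q = (p - q) * F' \<xi>" using mvt[of q p] assms by auto
    then show ?thesis using False by (intro exI[of _ \<xi>]) (auto simp: algebra_simps)
  qed
qed

lemma set_integrable_mult_continuous:
  fixes f h :: "real \<Rightarrow> real"
  assumes f: "set_integrable lborel {a..b} f" and h: "continuous_on UNIV h"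
  shows "set_integrable lborel {a..b} (\<lambda>x. h x * f x)"
proof -
  have "bounded (h ` {a..b})"
    by (intro compact_imp_bounded compact_continuous_image continuous_on_subset[OF h]) auto
  then obtain B where "\<forall>y\<in>h ` {a..b}. norm y \<le> B" by (auto simp: bounded_iff)
  then have "\<And>x. x \<in> {a..b} \<Longrightarrow> \<bar>h x\<bar> \<le> B" by auto
  moreover have "h \<in> borel_measurable lborel" using h by (simp add: borel_measurable_continuous_onI)
  ultimately have "set_integrable lborel {a..b} (\<lambda>x. f x * h x)"
    by (intro set_integrable_mult_bounded[OF f])
  then show ?thesis by (simp add: mult.commute)
qed

(* The local estimate comes from the mean value theorem and uniform
   continuity of F' on the compact image of [a, b]. *)
lemma ac_with_deriv_chain:
  fixes F F' :: "real \<Rightarrow> real"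
  assumes u: "ac_with_deriv u u'"
    and F: "\<And>y. y \<in> S \<Longrightarrow> (F has_real_derivative F' y) (at y)"
    and cF: "continuous_on S F'" and range: "\<And>t. u t \<in> S"
  shows "ac_with_deriv (\<lambda>t. F (u t)) (\<lambda>t. F' (u t) * u' t)"
proof (rule ac_with_deriv_of_local_estimate)
  have cu: "continuous_on A u" for A using u by (rule ac_with_deriv_continuous)
  have cFu: "continuous_on UNIV (\<lambda>t. F' (u t))"
    by (rule continuous_on_compose2[OF cF cu]) (use range in auto)
  have iu: "\<And>a b. set_integrable lborel {a..b} u'" using u by (rule ac_with_deriv_integrable)
  note HKu = locally_integrable_HK[OF iu]
  show iw: "set_integrable lborel {a..b} (\<lambda>t. F' (u t) * u' t)" for a b
    by (rule set_integrable_mult_continuous[OF iu cFu])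
  show "set_integrable lborel {a..b} u'" for a b by (rule iu)
  fix a b e :: real assume e: "e > 0"
  define K where "K = u ` {a..b}"
  have "compact K" unfolding K_def by (intro compact_continuous_image cu) simp
  moreover have "K \<subseteq> S" using range unfolding K_def by auto
  ultimately have "uniformly_continuous_on K F'"
    by (intro compact_uniformly_continuous continuous_on_subset[OF cF])
  then obtain d1 where "d1 > 0" and d1: "\<And>s t. s \<in> K \<Longrightarrow> t \<in> K \<Longrightarrow> \<bar>s - t\<bar> < d1 \<Longrightarrow> \<bar>F' s - F' t\<bar> < e"
    using e unfolding uniformly_continuous_on_def dist_real_def by metis
  have "uniformly_continuous_on {a..b} u" by (intro compact_uniformly_continuous cu) simp
  then obtain d2 where "d2 > 0" and d2: "\<And>s t. s \<in> {a..b} \<Longrightarrow> t \<in> {a..b} \<Longrightarrow> \<bar>s - t\<bar> < d2 \<Longrightarrow> \<bar>u s - u t\<bar> < d1"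
    using \<open>d1 > 0\<close> unfolding uniformly_continuous_on_def dist_real_def by metis
  show "\<exists>\<delta>>0. \<forall>x y. a \<le> x \<longrightarrow> x \<le> y \<longrightarrow> y \<le> b \<longrightarrow> y - x < \<delta> \<longrightarrow>
      \<bar>F (u y) - F (u x) - integral {x..y} (\<lambda>t. F' (u t) * u' t)\<bar> \<le> e * integral {x..y} (\<lambda>t. \<bar>u' t\<bar>)"
  proof (intro exI[of _ d2] conjI allI impI)
    fix x y assume xy: "a \<le> x" "x \<le> y" "y \<le> b" "y - x < d2"
    have conn: "connected (u ` {x..y})" by (intro connected_continuous_image cu) simp
    have ends: "u x \<in> u ` {x..y}" "u y \<in> u ` {x..y}" using xy by auto
    have between: "min (u x) (u y) \<le> z \<Longrightarrow> z \<le> max (u x) (u y) \<Longrightarrow> z \<in> u ` {x..y}" for z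
      using connectedD_interval[OF conn ends, of z] connectedD_interval[OF conn ends(2,1), of z]
      by (cases "u x \<le> u y") auto
    obtain \<xi> where \<xi>: "min (u x) (u y) \<le> \<xi>" "\<xi> \<le> max (u x) (u y)" "F (u y) - F (u x) = (u y - u x) * F' \<xi>"
      using mean_value_between[of "u x" "u y" F F'] F range between by blast
    then obtain \<tau> where \<tau>: "\<tau> \<in> {x..y}" "\<xi> = u \<tau>" using between by blast
    have int_w: "(\<lambda>t. F' (u t) * u' t) integrable_on {x..y}"
      using locally_integrable_HK(1)[OF iw] .
    have int_diff: "(\<lambda>t. u' t * (F' (u \<tau>) - F' (u t))) integrable_on {x..y}"
      using integrable_diff[OF integrable_on_mult_right[OF HKu(1), of "F' (u \<tau>)"] int_w]
      by (simp add: algebra_simps)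
    have "F (u y) - F (u x) - integral {x..y} (\<lambda>t. F' (u t) * u' t)
        = F' (u \<tau>) * integral {x..y} u' - integral {x..y} (\<lambda>t. F' (u t) * u' t)"
      using \<xi>(3) \<tau>(2) ac_with_deriv_HK[OF u xy(2)] by simp
    also have "\<dots> = integral {x..y} (\<lambda>t. u' t * (F' (u \<tau>) - F' (u t)))"
      using integral_diff[OF integrable_on_mult_right[OF HKu(1), of "F' (u \<tau>)"] int_w]
      by (simp add: algebra_simps)
    also have "\<bar>\<dots>\<bar> \<le> integral {x..y} (\<lambda>t. e * \<bar>u' t\<bar>)"
    proof (rule integral_norm_bound_integral[OF int_diff, unfolded real_norm_def])
      show "(\<lambda>t. e * \<bar>u' t\<bar>) integrable_on {x..y}" by (rule integrable_on_mult_right[OF HKu(2)])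
      fix t assume "t \<in> {x..y}"
      then have "\<bar>u \<tau> - u t\<bar> < d1" using \<tau>(1) xy by (intro d2) auto
      then have "\<bar>F' (u \<tau>) - F' (u t)\<bar> \<le> e" using \<open>t \<in> {x..y}\<close> \<tau>(1) xy
        by (intro less_imp_le d1) (auto simp: K_def)
      then show "\<bar>u' t * (F' (u \<tau>) - F' (u t))\<bar> \<le> e * \<bar>u' t\<bar>"
        by (simp add: abs_mult) (metis abs_ge_zero mult.commute mult_left_mono)
    qed
    finally show "\<bar>F (u y) - F (u x) - integral {x..y} (\<lambda>t. F' (u t) * u' t)\<bar> \<le> e * integral {x..y} (\<lambda>t. \<bar>u' t\<bar>)"
      by simp
  qed (use \<open>d2 > 0\<close> in simp)
qed

(* Product rule, obtained from the chain rule for squaring by polarization. *)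
lemma ac_with_deriv_mult:
  assumes u: "ac_with_deriv u u'" and v: "ac_with_deriv v v'"
  shows "ac_with_deriv (\<lambda>x. u x * v x) (\<lambda>x. u' x * v x + u x * v' x)"
proof -
  have square: "ac_with_deriv (\<lambda>x. (f x)\<^sup>2) (\<lambda>x. 2 * f x * f' x)" if "ac_with_deriv f f'" for f f'
  proof (rule ac_with_deriv_chain[OF that, of UNIV "\<lambda>y. y\<^sup>2" "\<lambda>y. 2 * y", simplified])
    show "((\<lambda>y. y\<^sup>2) has_real_derivative 2 * y) (at y)" for y :: real
      by (auto intro!: derivative_eq_intros)
  qed
  have "ac_with_deriv (\<lambda>x. 1/4 * ((u x + v x)\<^sup>2 - (u x - v x)\<^sup>2))
      (\<lambda>x. 1/4 * (2 * (u x + v x) * (u' x + v' x) - 2 * (u x - v x) * (u' x - v' x)))"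
    by (intro ac_with_deriv_cmult ac_with_deriv_diff square ac_with_deriv_add u v)
  then show ?thesis
    by (rule ac_with_deriv_cong) (simp_all add: power2_eq_square algebra_simps)
qed

lemma ac_with_deriv_limits:
  assumes u: "ac_with_deriv u u'" and i': "integrable lborel u'"
  shows "(u \<longlongrightarrow> u 0 + (LINT t:{0..}|lborel. u' t)) at_top"
    and "(u \<longlongrightarrow> u 0 - (LINT t:{..0}|lborel. u' t)) at_bot"
proof -
  have "((\<lambda>b. LINT t:{0..b}|lborel. u' t) \<longlongrightarrow> (LINT t:{0..}|lborel. u' t)) at_top"
    by (intro tendsto_set_lebesgue_integral_at_top set_integrable_of_integrable[OF i']) simp_all
  then have "((\<lambda>b. u 0 + (LINT t:{0..b}|lborel. u' t)) \<longlongrightarrow> u 0 + (LINT t:{0..}|lborel. u' t)) at_top"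
    by (intro tendsto_add tendsto_const)
  moreover have "\<forall>\<^sub>F b in at_top. u 0 + (LINT t:{0..b}|lborel. u' t) = u b"
    using eventually_ge_at_top[of "0::real"]
    by eventually_elim (use ac_with_deriv_increment[OF u] in force)
  ultimately show "(u \<longlongrightarrow> u 0 + (LINT t:{0..}|lborel. u' t)) at_top"
    by (rule Lim_transform_eventually)
  have "((\<lambda>a. LINT t:{a..0}|lborel. u' t) \<longlongrightarrow> (LINT t:{..0}|lborel. u' t)) at_bot"
    by (intro tendsto_set_lebesgue_integral_at_bot set_integrable_of_integrable[OF i']) simp_all
  then have "((\<lambda>a. u 0 - (LINT t:{a..0}|lborel. u' t)) \<longlongrightarrow> u 0 - (LINT t:{..0}|lborel. u' t)) at_bot"
    by (intro tendsto_diff tendsto_const)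
  moreover have "\<forall>\<^sub>F a in at_bot. u 0 - (LINT t:{a..0}|lborel. u' t) = u a"
    using eventually_le_at_bot[of "0::real"]
    by eventually_elim (use ac_with_deriv_increment[OF u] in force)
  ultimately show "(u \<longlongrightarrow> u 0 - (LINT t:{..0}|lborel. u' t)) at_bot"
    by (rule Lim_transform_eventually)
qed

lemma integrable_limit_at_top_zero:
  fixes u :: "real \<Rightarrow> real"
  assumes lim: "(u \<longlongrightarrow> L) at_top" and int: "integrable lborel u"
  shows "L = 0"
proof (rule ccontr)
  assume "L \<noteq> 0"
  then have "\<forall>\<^sub>F x in at_top. \<bar>L\<bar> / 2 < \<bar>u x\<bar>"
    by (intro order_tendstoD(1)[OF tendsto_rabs[OF lim]]) simp
  then obtain M where M: "\<And>x. x \<ge> M \<Longrightarrow> \<bar>L\<bar> / 2 < \<bar>u x\<bar>"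
    by (auto simp: eventually_at_top_linorder)
  have iabs: "integrable lborel (\<lambda>x. \<bar>u x\<bar>)" using int by auto
  have bound: "real n * (\<bar>L\<bar> / 2) \<le> integral\<^sup>L lborel (\<lambda>x. \<bar>u x\<bar>)" for n :: nat
  proof -
    have su: "set_integrable lborel {M..M + real n} (\<lambda>x. \<bar>u x\<bar>)"
      using iabs by (rule set_integrable_of_integrable) simp
    have "real n * (\<bar>L\<bar> / 2) = (LINT x:{M..M + real n}|lborel. \<bar>L\<bar> / 2)"
      by (simp add: set_integral_const emeasure_lborel_Icc measure_def)
    also have "\<dots> \<le> (LINT x:{M..M + real n}|lborel. \<bar>u x\<bar>)"
      by (rule set_integral_mono[OF _ su])
        (use M in \<open>auto simp: set_integrable_def intro: less_imp_le integrable_real_indicator\<close>)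
    also have "\<dots> \<le> integral\<^sup>L lborel (\<lambda>x. \<bar>u x\<bar>)"
      unfolding set_lebesgue_integral_def
      by (rule integral_mono[OF su[unfolded set_integrable_def] iabs]) (auto simp: indicator_def)
    finally show ?thesis .
  qed
  obtain n :: nat where "integral\<^sup>L lborel (\<lambda>x. \<bar>u x\<bar>) / (\<bar>L\<bar> / 2) < real n"
    using reals_Archimedean2 by blast
  then have "integral\<^sup>L lborel (\<lambda>x. \<bar>u x\<bar>) < real n * (\<bar>L\<bar> / 2)"
    using \<open>L \<noteq> 0\<close> by (simp add: pos_divide_less_eq)
  with bound[of n] show False by simp
qed

lemma ac_with_deriv_vanishes_at_infinity:
  assumes u: "ac_with_deriv u u'" and i': "integrable lborel u'" and i: "integrable lborel u"
  shows "(u \<longlongrightarrow> 0) at_top" "(u \<longlongrightarrow> 0) at_bot"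
proof -
  note lims = ac_with_deriv_limits[OF u i']
  show "(u \<longlongrightarrow> 0) at_top"
    using lims(1) integrable_limit_at_top_zero[OF lims(1) i] by simp
  have "((\<lambda>x. u (- x)) \<longlongrightarrow> u 0 - (LINT t:{..0}|lborel. u' t)) at_top"
    using lims(2) by (simp add: filterlim_at_bot_mirror)
  moreover have "integrable lborel (\<lambda>x. u (- x))"
    using lborel_integrable_real_affine_iff[of "-1" u 0] i by simp
  ultimately show "(u \<longlongrightarrow> 0) at_bot"
    using lims(2) integrable_limit_at_top_zero by metis
qed

lemma integral_symmetric_truncations:
  fixes f :: "real \<Rightarrow> real"
  assumes f: "integrable lborel f"
  shows "(\<lambda>n::nat. LINT x:{-real n..real n}|lborel. f x) \<longlonglongrightarrow> integral\<^sup>L lborel f"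
  unfolding set_lebesgue_integral_def
proof (rule integral_dominated_convergence[where w="\<lambda>x. norm (f x)"])
  show "AE x in lborel. (\<lambda>i. indicator {-real i..real i} x *\<^sub>R f x) \<longlonglongrightarrow> f x"
  proof (rule AE_I2, rule tendsto_eventually)
    fix x :: real
    obtain N :: nat where "\<bar>x\<bar> \<le> real N" using real_arch_simple by blast
    then show "\<forall>\<^sub>F n in sequentially. indicator {-real n..real n} x *\<^sub>R f x = f x"
      unfolding eventually_sequentially by (intro exI[of _ N]) (auto simp: indicator_def)
  qed
qed (use f in \<open>auto simp: indicator_def\<close>)

lemma integral_of_derivative_zero:
  assumes u: "ac_with_deriv u u'" and i': "integrable lborel u'" and i: "integrable lborel u"
  shows "integral\<^sup>L lborel u' = 0"
proof -
  note vanish = ac_with_deriv_vanishes_at_infinity[OF u i' i]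
  have "(LINT x:{-real n..real n}|lborel. u' x) = u (real n) - u (- real n)" for n :: nat
    using ac_with_deriv_increment[OF u, of "-real n" "real n"] by simp
  moreover have "(\<lambda>n::nat. u (real n) - u (- real n)) \<longlonglongrightarrow> 0 - 0"
    by (intro tendsto_diff filterlim_compose[OF vanish(1) filterlim_real_sequentially]
        filterlim_compose[OF vanish(2)])
      (simp add: filterlim_uminus_at_bot filterlim_real_sequentially)
  ultimately have "(\<lambda>n::nat. LINT x:{-real n..real n}|lborel. u' x) \<longlonglongrightarrow> 0" by simp
  then show ?thesis using integral_symmetric_truncations[OF i'] LIMSEQ_unique by blast
qed

lemma emeasure_density_Ioi:
  fixes Q :: "real \<Rightarrow> real"
  assumes iQ: "integrable lborel Q" and Q0: "\<And>x. Q x \<ge> 0"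
  shows "emeasure (density lborel (\<lambda>x. ennreal (Q x))) {c<..} = ennreal (LINT x:{c<..}|lborel. Q x)"
proof -
  have iQ': "integrable lborel (\<lambda>x. indicator {c<..} x * Q x)"
    using integrable_mult_indicator[OF _ iQ, of "{c<..}"] by simp
  have "emeasure (density lborel (\<lambda>x. ennreal (Q x))) {c<..} = (\<integral>\<^sup>+ x. ennreal (Q x) * indicator {c<..} x \<partial>lborel)"
    using iQ by (intro emeasure_density) auto
  also have "\<dots> = (\<integral>\<^sup>+ x. ennreal (indicator {c<..} x * Q x) \<partial>lborel)"
    by (intro nn_integral_cong) (auto simp: indicator_def)
  also have "\<dots> = ennreal (LINT x:{c<..}|lborel. Q x)"
    unfolding set_lebesgue_integral_def using nn_integral_eq_integral[OF iQ'] Q0 by simp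
  finally show ?thesis .
qed

(* An integrable function whose integrals over all rays (c, oo) vanish is zero a.e.: the measures with
   densities given by its positive and negative parts coincide on rays, hence everywhere. *)
lemma ae_zero_of_tail_integrals:
  fixes h :: "real \<Rightarrow> real"
  assumes ih: "integrable lborel h" and tails: "\<And>c. (LINT x:{c<..}|lborel. h x) = 0"
  shows "AE x in lborel. h x = 0"
proof -
  define P where "P x = max 0 (h x)" for x
  define N where "N x = max 0 (- h x)" for x
  have iP: "integrable lborel P" and iN: "integrable lborel N"
    unfolding P_def N_def by (auto intro!: integrable_max ih)
  have P0: "P x \<ge> 0" and N0: "N x \<ge> 0" for x by (auto simp: P_def N_def)
  have hPN: "h x = P x - N x" for x by (simp add: P_def N_def max_def)
  have PN: "(LINT x:{c<..}|lborel. P x) = (LINT x:{c<..}|lborel. N x)" for c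
    using set_integral_diff(2)[OF set_integrable_of_integrable[OF iP] set_integrable_of_integrable[OF iN],
        of "{c<..}"] tails[of c]
    by (simp add: hPN)
  have "density lborel (\<lambda>x. ennreal (P x)) = density lborel (\<lambda>x. ennreal (N x))"
  proof (rule measure_eqI_lessThan)
    show "emeasure (density lborel (\<lambda>x. ennreal (P x))) {x<..} < \<infinity>" for x
      using emeasure_density_Ioi[OF iP P0] by simp
    show "emeasure (density lborel (\<lambda>x. ennreal (P x))) {x<..} = emeasure (density lborel (\<lambda>x. ennreal (N x))) {x<..}" for x
      using emeasure_density_Ioi[OF iP P0, of x] emeasure_density_Ioi[OF iN N0, of x] PN[of x] by simp
  qed simp_all
  then have "AE x in lborel. ennreal (P x) = ennreal (N x)"
    using iP iN by (intro sigma_finite_measure.density_unique[OF sigma_finite_lborel]) auto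
  then show ?thesis by eventually_elim (use P0 N0 in \<open>auto simp: hPN\<close>)
qed

lemma ae_zero_of_interval_integrals:
  fixes g :: "real \<Rightarrow> real"
  assumes i: "\<And>a b. set_integrable lborel {a..b} g"
    and z: "\<And>a b. a \<le> b \<Longrightarrow> (LINT t:{a..b}|lborel. g t) = 0"
  shows "AE x in lborel. g x = 0"
proof -
  have gm: "g \<in> borel_measurable lborel" by (rule locally_integrable_measurable[OF i])
  have truncated: "AE x in lborel. indicator {-real n..real n} x * g x = 0" for n :: nat
  proof (rule ae_zero_of_tail_integrals)
    show "integrable lborel (\<lambda>x. indicator {-real n..real n} x * g x)"
      using i[of "-real n" "real n"] unfolding set_integrable_def by simp
    fix c :: real
    define d where "d = max c (-real n)"
    have "(LINT x:{c<..}|lborel. indicator {-real n..real n} x * g x) = (LINT x:{d..real n}|lborel. g x)"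
      unfolding set_lebesgue_integral_def
    proof (rule integral_cong_AE)
      show "AE x in lborel. indicator {c<..} x *\<^sub>R (indicator {-real n..real n} x * g x) =
          indicator {d..real n} x *\<^sub>R g x"
        using AE_lborel_singleton[of d] by eventually_elim (auto simp: indicator_def d_def)
    qed (use gm in auto)
    also have "\<dots> = 0"
      using z[of d "real n"] by (cases "d \<le> real n") (auto simp: set_lebesgue_integral_def)
    finally show "(LINT x:{c<..}|lborel. indicator {-real n..real n} x * g x) = 0" .
  qed
  have "AE x in lborel. \<forall>n::nat. indicator {-real n..real n} x * g x = 0"
    using truncated by (subst AE_all_countable) (rule allI)
  then show ?thesis
  proof eventually_elim
    case (elim x)
    obtain n :: nat where "\<bar>x\<bar> \<le> real n" using real_arch_simple by blast
    then show ?case using elim[rule_format, of n] by (auto simp: indicator_def split: if_splits)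
  qed
qed

(* The Fisher information integrand w^2/p, set to 0 off {p > 0}; with w = p' it integrates to
   fisher_info p p', with w = p' + x p to the relative Fisher information I(X||Z). *)
definition fisher_density :: "(real \<Rightarrow> real) \<Rightarrow> (real \<Rightarrow> real) \<Rightarrow> real \<Rightarrow> real" where
  "fisher_density p p' x = (if p x > 0 then (p' x)\<^sup>2 / p x else 0)"

lemma fisher_density_nonneg: "fisher_density p p' x \<ge> 0"
  by (simp add: fisher_density_def)

lemma fisher_density_eq: "fisher_density p p' = (\<lambda>x. indicator {x. p x > 0} x *\<^sub>R ((p' x)\<^sup>2 / p x))"
  by (auto simp: fisher_density_def indicator_def)

lemma borel_measurable_fisher_density[measurable]:
  assumes "p \<in> borel_measurable borel" "w \<in> borel_measurable borel"
  shows "fisher_density p w \<in> borel_measurable borel"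
  unfolding fisher_density_def[abs_def] using assms by measurable

lemma finite_fisher_info_integrable:
  "finite_fisher_info p p' \<longleftrightarrow> integrable lborel (fisher_density p p')"
  by (simp add: finite_fisher_info_def set_integrable_def fisher_density_eq)

lemma fisher_info_integral: "fisher_info p p' = integral\<^sup>L lborel (fisher_density p p')"
  by (simp add: fisher_info_def set_lebesgue_integral_def fisher_density_eq)

lemma abs_mult_le_weighted_squares:
  fixes a b q :: real
  assumes "q > 0"
  shows "\<bar>a * b\<bar> \<le> (a\<^sup>2 / q + b\<^sup>2 * q) / 2"
proof -
  have "0 \<le> (\<bar>a\<bar> - \<bar>b\<bar> * q)\<^sup>2" by simp
  then have "\<bar>a * b\<bar> * (2 * q) \<le> a\<^sup>2 + b\<^sup>2 * q\<^sup>2"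
    by (simp add: power2_eq_square algebra_simps abs_mult)
  then show ?thesis using assms by (simp add: field_simps power2_eq_square)
qed

lemma ac_with_deriv_sqrt_shift:
  assumes nonneg: "\<And>x. p x \<ge> 0" and ac: "ac_with_deriv p p'" and e: "e > 0"
  shows "ac_with_deriv (\<lambda>t. sqrt (p t + e)) (\<lambda>t. p' t / (2 * sqrt (p t + e)))"
proof (rule ac_with_deriv_cong[OF ac_with_deriv_chain[OF ac, of "{-e<..}"]])
  show "((\<lambda>y. sqrt (y + e)) has_real_derivative inverse (sqrt (y + e)) / 2) (at y)" if "y \<in> {-e<..}" for y
    using that by (auto intro!: derivative_eq_intros)
  show "continuous_on {-e<..} (\<lambda>y. inverse (sqrt (y + e)) / 2)"
    by (intro continuous_intros) auto
  show "p t \<in> {-e<..}" for t using nonneg[of t] e by simp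
qed (auto simp: field_simps)

lemma zero_set_part_integrable:
  assumes ac: "ac_with_deriv p p'"
  shows "set_integrable lborel {a..b} (\<lambda>t. if p t = 0 then p' t else 0)"
proof -
  have "p \<in> borel_measurable lborel"
    using ac_with_deriv_continuous[OF ac] by (simp add: borel_measurable_continuous_onI)
  then have "set_integrable lborel {a..b} (\<lambda>t. p' t * (if p t = 0 then 1 else 0))"
    by (intro set_integrable_mult_bounded[OF ac_with_deriv_integrable[OF ac], where B=1]) auto
  moreover have "(\<lambda>t. p' t * (if p t = 0 then 1 else 0)) = (\<lambda>t. if p t = 0 then p' t else 0)"
    by auto
  ultimately show ?thesis by simp
qed

lemma sqrt_shift_deriv_bound:
  assumes p: "p t > 0" and e: "e > 0"
  shows "\<bar>p' t / (2 * sqrt (p t + e))\<bar> \<le> (fisher_density p p' t + 1) / 4"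
proof -
  have "\<bar>p' t / (2 * sqrt (p t + e))\<bar> \<le> \<bar>p' t * (1 / (2 * sqrt (p t)))\<bar>"
    using p e by (auto simp: abs_mult intro!: divide_left_mono)
  also have "\<dots> \<le> ((p' t)\<^sup>2 / (2 * p t) + (1 / (2 * sqrt (p t)))\<^sup>2 * (2 * p t)) / 2"
    using p by (intro abs_mult_le_weighted_squares) simp
  also have "\<dots> = (fisher_density p p' t + 1) / 4"
    using p by (simp add: fisher_density_def power_divide field_simps)
  finally show ?thesis .
qed

(* Key estimate: the derivative of sqrt (p + e) equals p'/(2 sqrt e) on {p = 0}, while its part on
   {p > 0} and its increment over [a, b] stay bounded as e -> 0; so int_a^b p' 1_{p=0} = O(sqrt e). *)
lemma zero_set_increment_estimate:
  fixes p p' :: "real \<Rightarrow> real"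
  assumes nonneg: "\<And>x. p x \<ge> 0" and ac: "ac_with_deriv p p'"
    and fisher: "integrable lborel (fisher_density p p')"
    and e: "0 < e" "e \<le> 1" and ab: "a \<le> b"
  shows "\<bar>LINT t:{a..b}|lborel. (if p t = 0 then p' t else 0)\<bar> / (2 * sqrt e)
    \<le> sqrt (p b + 1) + sqrt (p a + 1) + (LINT t:{a..b}|lborel. fisher_density p p' t + 1) / 4"
proof -
  define g where "g t = (if p t = 0 then p' t else 0)" for t
  define w where "w t = p' t / (2 * sqrt (p t + e))" for t
  define r where "r t = (if p t > 0 then w t else 0)" for t
  have sq: "ac_with_deriv (\<lambda>t. sqrt (p t + e)) w"
    unfolding w_def[abs_def] by (rule ac_with_deriv_sqrt_shift[OF nonneg ac e(1)])
  have ig: "set_integrable lborel {a..b} g"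
    unfolding g_def[abs_def] by (rule zero_set_part_integrable[OF ac])
  have w_split: "w t = g t / (2 * sqrt e) + r t" for t
    using nonneg[of t] by (auto simp: w_def r_def g_def)
  have ir: "set_integrable lborel {a..b} r"
    using set_integral_diff(1)[OF ac_with_deriv_integrable[OF sq] set_integrable_divide[OF ig, of "2 * sqrt e"]]
    by (simp add: w_split)
  have iT: "set_integrable lborel {a..b} (\<lambda>t. fisher_density p p' t + 1)"
  proof (rule set_integral_add(1))
    show "set_integrable lborel {a..b} (fisher_density p p')"
      by (rule set_integrable_of_integrable[OF fisher]) simp
    show "set_integrable lborel {a..b} (\<lambda>t. 1::real)"
      by (simp add: set_integrable_def integrable_real_indicator emeasure_lborel_Icc_eq)
  qed
  have "sqrt (p b + e) - sqrt (p a + e) = (LINT t:{a..b}|lborel. g t / (2 * sqrt e) + r t)"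
    using ac_with_deriv_increment[OF sq ab] by (simp add: w_split)
  also have "\<dots> = (LINT t:{a..b}|lborel. g t) / (2 * sqrt e) + (LINT t:{a..b}|lborel. r t)"
    using set_integral_add(2)[OF set_integrable_divide[OF ig] ir] by (simp add: set_integral_divide_zero)
  finally have incr: "(LINT t:{a..b}|lborel. g t) / (2 * sqrt e)
      = sqrt (p b + e) - sqrt (p a + e) - (LINT t:{a..b}|lborel. r t)" by simp
  have "\<bar>sqrt (p b + e) - sqrt (p a + e)\<bar> \<le> sqrt (p b + 1) + sqrt (p a + 1)"
  proof -
    have "sqrt (p b + e) \<le> sqrt (p b + 1)" "sqrt (p a + e) \<le> sqrt (p a + 1)"
      "0 \<le> sqrt (p b + e)" "0 \<le> sqrt (p a + e)"
      using e nonneg[of a] nonneg[of b] by auto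
    then show ?thesis unfolding abs_le_iff by linarith
  qed
  moreover have "\<bar>LINT t:{a..b}|lborel. r t\<bar> \<le> (LINT t:{a..b}|lborel. fisher_density p p' t + 1) / 4"
  proof -
    have "\<bar>r t\<bar> \<le> (fisher_density p p' t + 1) / 4" for t
      using sqrt_shift_deriv_bound[of p t e p'] e
      by (cases "p t > 0") (simp_all add: r_def w_def fisher_density_def)
    then have "(LINT t:{a..b}|lborel. \<bar>r t\<bar>) \<le> (LINT t:{a..b}|lborel. (fisher_density p p' t + 1) / 4)"
      by (intro set_integral_mono[OF set_integrable_abs[OF ir] set_integrable_divide[OF iT]])
    then show ?thesis
      using set_integral_norm_bound[OF ir] by (simp add: set_integral_divide_zero)
  qed
  moreover have "\<bar>LINT t:{a..b}|lborel. g t\<bar> / (2 * sqrt e)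
      = \<bar>sqrt (p b + e) - sqrt (p a + e) - (LINT t:{a..b}|lborel. r t)\<bar>"
    using e by (simp flip: incr add: abs_divide)
  ultimately show ?thesis unfolding g_def[symmetric] by linarith
qed

lemma deriv_vanishes_on_zero_set:
  fixes p p' :: "real \<Rightarrow> real"
  assumes nonneg: "\<And>x. p x \<ge> 0" and ac: "ac_with_deriv p p'"
    and fisher: "integrable lborel (fisher_density p p')"
  shows "AE x in lborel. p x = 0 \<longrightarrow> p' x = 0"
proof -
  define g where "g t = (if p t = 0 then p' t else 0)" for t
  have "(LINT t:{a..b}|lborel. g t) = 0" if ab: "a \<le> b" for a b
  proof -
    define C where "C = sqrt (p b + 1) + sqrt (p a + 1) + (LINT t:{a..b}|lborel. fisher_density p p' t + 1) / 4"
    have "((\<lambda>e. 2 * sqrt e * C) \<longlongrightarrow> 2 * sqrt 0 * C) (at_right 0)"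
      by (intro tendsto_intros)
    moreover have "\<forall>\<^sub>F e in at_right 0. \<bar>LINT t:{a..b}|lborel. g t\<bar> \<le> 2 * sqrt e * C"
    proof (rule eventually_mono[OF eventually_at_right_real[of 0 1]])
      fix e :: real assume "e \<in> {0<..<1}"
      then show "\<bar>LINT t:{a..b}|lborel. g t\<bar> \<le> 2 * sqrt e * C"
        using zero_set_increment_estimate[OF nonneg ac fisher _ _ ab, of e]
        by (simp add: g_def C_def field_simps)
    qed simp
    ultimately have "\<bar>LINT t:{a..b}|lborel. g t\<bar> \<le> 0"
      by (intro tendsto_le[OF _ _ tendsto_const]) simp_all
    then show ?thesis by simp
  qed
  then have "AE x in lborel. g x = 0"
    by (intro ae_zero_of_interval_integrals) (simp_all add: g_def[abs_def] zero_set_part_integrable[OF ac])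
  then show ?thesis by eventually_elim (auto simp: g_def)
qed

(* If h^2 p is integrable then so is h p', since |h p'| <= (p'^2/p + h^2 p)/2 where p > 0 and p' = 0
   a.e. where p = 0.  Used with h = 1 and h = x. *)
lemma weighted_deriv_integrable:
  fixes p p' h :: "real \<Rightarrow> real"
  assumes nonneg: "\<And>x. p x \<ge> 0" and ac: "ac_with_deriv p p'"
    and fisher: "integrable lborel (fisher_density p p')"
    and hm: "h \<in> borel_measurable lborel" and moment: "integrable lborel (\<lambda>x. (h x)\<^sup>2 * p x)"
  shows "integrable lborel (\<lambda>x. h x * p' x)"
proof (rule Bochner_Integration.integrable_bound)
  show "integrable lborel (\<lambda>x. (fisher_density p p' x + (h x)\<^sup>2 * p x) / 2)"
    using fisher moment by simp
  show "(\<lambda>x. h x * p' x) \<in> borel_measurable lborel"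
    using hm ac_with_deriv_measurable[OF ac] by measurable
  show "AE x in lborel. norm (h x * p' x) \<le> norm ((fisher_density p p' x + (h x)\<^sup>2 * p x) / 2)"
    using deriv_vanishes_on_zero_set[OF nonneg ac fisher]
  proof eventually_elim
    case (elim x)
    have "\<bar>h x * p' x\<bar> \<le> (fisher_density p p' x + (h x)\<^sup>2 * p x) / 2"
    proof (cases "p x > 0")
      case True
      then show ?thesis
        using abs_mult_le_weighted_squares[OF True, of "p' x" "h x"]
        by (simp add: fisher_density_def mult.commute)
    next
      case False
      then show ?thesis using elim nonneg[of x] fisher_density_nonneg[of p p' x] by simp
    qed
    then show ?case by simp
  qed
qed

lemma integral_x_times_deriv:
  assumes ac: "ac_with_deriv p p'" and ip: "integrable lborel p"
    and mean_int: "integrable lborel (\<lambda>x. x * p x)" and ixp': "integrable lborel (\<lambda>x. x * p' x)"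
  shows "(LINT x|lborel. x * p' x) = - (LINT x|lborel. p x)"
proof -
  have "ac_with_deriv (\<lambda>x. x * p x) (\<lambda>x. 1 * p x + x * p' x)"
    by (intro ac_with_deriv_mult ac ac_with_deriv_C1) (auto intro!: derivative_eq_intros)
  then have "(LINT x|lborel. 1 * p x + x * p' x) = 0"
    by (rule integral_of_derivative_zero) (simp_all add: ip ixp' mean_int)
  then show ?thesis using ip ixp' by simp
qed

lemma relative_fisher_identity:
  fixes p p' :: "real \<Rightarrow> real"
  assumes nonneg: "\<And>x. p x \<ge> 0" and ac: "ac_with_deriv p p'"
    and fisher: "integrable lborel (fisher_density p p')"
    and ixp': "integrable lborel (\<lambda>x. x * p' x)" and var_int: "integrable lborel (\<lambda>x. x\<^sup>2 * p x)"
  shows "integrable lborel (fisher_density p (\<lambda>x. p' x + x * p x))"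
    and "(LINT x|lborel. fisher_density p (\<lambda>x. p' x + x * p x) x)
      = (LINT x|lborel. fisher_density p p' x) + 2 * (LINT x|lborel. x * p' x) + (LINT x|lborel. x\<^sup>2 * p x)"
proof -
  have ae: "AE x in lborel. fisher_density p (\<lambda>x. p' x + x * p x) x
      = fisher_density p p' x + 2 * (x * p' x) + x\<^sup>2 * p x"
    using deriv_vanishes_on_zero_set[OF nonneg ac fisher]
  proof eventually_elim
    case (elim x)
    then show ?case using nonneg[of x]
      by (cases "p x > 0") (auto simp: fisher_density_def power2_eq_square field_simps)
  qed
  have i: "integrable lborel (\<lambda>x. fisher_density p p' x + 2 * (x * p' x) + x\<^sup>2 * p x)"
    using fisher ixp' var_int by simp
  have "p \<in> borel_measurable borel"
    using ac_with_deriv_continuous[OF ac] by (simp add: borel_measurable_continuous_onI)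
  then have m: "fisher_density p (\<lambda>x. p' x + x * p x) \<in> borel_measurable lborel"
    using ac_with_deriv_measurable[OF ac] by simp
  show "integrable lborel (fisher_density p (\<lambda>x. p' x + x * p x))"
    by (rule integrable_cong_AE_imp[OF i m]) (use ae in \<open>auto elim: AE_mp\<close>)
  have "(LINT x|lborel. fisher_density p (\<lambda>x. p' x + x * p x) x)
      = (LINT x|lborel. fisher_density p p' x + 2 * (x * p' x) + x\<^sup>2 * p x)"
    by (rule integral_cong_AE[OF m _ ae]) (use i in auto)
  then show "(LINT x|lborel. fisher_density p (\<lambda>x. p' x + x * p x) x)
      = (LINT x|lborel. fisher_density p p' x) + 2 * (LINT x|lborel. x * p' x) + (LINT x|lborel. x\<^sup>2 * p x)"
    using fisher ixp' var_int by simp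
qed

lemma le_sqrt_of_amgm_bounds:
  fixes A J :: real
  assumes J0: "J \<ge> 0" and bounds: "\<And>l. l > 0 \<Longrightarrow> A \<le> (l * J + 1 / l) / 2"
  shows "A \<le> sqrt J"
proof (cases "J > 0")
  case True
  then show ?thesis using bounds[of "1 / sqrt J"] real_div_sqrt[of J] by simp
next
  case False
  then have "J = 0" using J0 by simp
  have "A \<le> 0 + d" if "d > 0" for d
    using bounds[of "1 / (2 * d)"] that \<open>J = 0\<close> by simp
  then have "A \<le> 0" by (rule field_le_epsilon)
  then show ?thesis using \<open>J = 0\<close> by simp
qed

lemma l1_norm_le_sqrt_fisher_density:
  fixes p w :: "real \<Rightarrow> real"
  assumes nonneg: "\<And>x. p x \<ge> 0" and ip: "integrable lborel p" and total: "(LINT x|lborel. p x) = 1"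
    and iw: "integrable lborel w" and zero: "AE x in lborel. p x = 0 \<longrightarrow> w x = 0"
    and iJ: "integrable lborel (fisher_density p w)"
  shows "(LINT x|lborel. \<bar>w x\<bar>) \<le> sqrt (LINT x|lborel. fisher_density p w x)"
proof (rule le_sqrt_of_amgm_bounds)
  show "0 \<le> (LINT x|lborel. fisher_density p w x)"
    by (simp add: fisher_density_nonneg)
  fix l :: real assume l: "l > 0"
  have "(LINT x|lborel. \<bar>w x\<bar>) \<le> (LINT x|lborel. (l * fisher_density p w x + p x / l) / 2)"
  proof (rule integral_mono_AE)
    show "AE x in lborel. \<bar>w x\<bar> \<le> (l * fisher_density p w x + p x / l) / 2"
      using zero
    proof eventually_elim
      case (elim x)
      show ?case
      proof (cases "p x > 0")
        case True
        then have "p x / l > 0" using l by simp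
        from abs_mult_le_weighted_squares[OF this, of "w x" 1] show ?thesis
          using True l by (simp add: fisher_density_def field_simps)
      next
        case False
        then show ?thesis using elim nonneg[of x] l by (simp add: fisher_density_def)
      qed
    qed
  qed (use iw iJ ip in simp_all)
  also have "\<dots> = (l * (LINT x|lborel. fisher_density p w x) + 1 / l) / 2"
    using iJ ip total by simp
  finally show "(LINT x|lborel. \<bar>w x\<bar>) \<le> (l * (LINT x|lborel. fisher_density p w x) + 1 / l) / 2" .
qed

abbreviation \<phi> :: "real \<Rightarrow> real" where "\<phi> \<equiv> std_normal_density"

lemma std_normal_density_pos: "\<phi> x > 0"
  by (simp add: normal_density_pos)

lemma std_normal_density_nonzero: "\<phi> x \<noteq> 0"
  using std_normal_density_pos[of x] by simp

lemma std_normal_density_even: "\<phi> (- x) = \<phi> x"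
  by (simp add: std_normal_density_def)

lemma std_normal_density_eq: "\<phi> = (\<lambda>x. (1 / sqrt (2 * pi)) * exp (- x\<^sup>2 / 2))"
  by (rule ext) (rule std_normal_density_def)

lemma std_normal_density_deriv: "(\<phi> has_real_derivative - x * \<phi> x) (at x)"
proof -
  have "((\<lambda>x. c * exp (- x\<^sup>2 / 2)) has_real_derivative - x * (c * exp (- x\<^sup>2 / 2))) (at x)" for c :: real
    by (auto intro!: derivative_eq_intros simp: algebra_simps)
  then show ?thesis unfolding std_normal_density_eq .
qed

lemma std_normal_density_continuous: "continuous_on A \<phi>"
  unfolding std_normal_density_eq by (intro continuous_intros) auto

lemma std_normal_integrable:
  "integrable lborel \<phi>" "integrable lborel (\<lambda>x. x * \<phi> x)" "integrable lborel (\<lambda>x. \<bar>x\<bar> * \<phi> x)"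
  using integrable_std_normal_moment[of 1] integrable_std_normal_moment_abs[of 1]
  by (simp_all add: mult.commute)

(* E|Z| = sqrt (2/pi) <= 1. *)
lemma std_normal_abs_moment_le_1: "(LINT x|lborel. \<bar>x\<bar> * \<phi> x) \<le> 1"
proof -
  have "(LINT x|lborel. \<bar>x\<bar> * \<phi> x) = sqrt (2 / pi)"
    using integral_std_normal_moment_abs_odd[of 0] by (simp add: mult.commute)
  also have "\<dots> \<le> 1" using pi_gt3 by simp
  finally show ?thesis .
qed

lemma ac_with_deriv_inverse_std_normal: "ac_with_deriv (\<lambda>x. 1 / \<phi> x) (\<lambda>x. x * (1 / \<phi> x))"
proof (rule ac_with_deriv_C1)
  show "((\<lambda>x. 1 / \<phi> x) has_real_derivative x * (1 / \<phi> x)) (at x)" for x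
  proof -
    have "((\<lambda>x. inverse (\<phi> x)) has_real_derivative x * inverse (\<phi> x)) (at x)"
      using std_normal_density_pos[of x]
      by (intro DERIV_cong[OF DERIV_inverse_fun[OF std_normal_density_deriv]])
        (auto simp: field_simps power2_eq_square)
    then show ?thesis by (simp add: inverse_eq_divide)
  qed
  show "continuous_on UNIV (\<lambda>x. x * (1 / \<phi> x))"
    by (intro continuous_intros std_normal_density_continuous) (simp add: std_normal_density_nonzero)
qed

lemma std_normal_density_exp_bound:
  assumes "0 \<le> x" "x \<le> t"
  shows "\<phi> t \<le> exp (1/2) * \<phi> x * exp (- (t - x))"
proof -
  have "0 \<le> (t - x - 1)\<^sup>2 + 2 * (x * (t - x))" using assms by simp
  then have "- t\<^sup>2 / 2 \<le> 1/2 + (- x\<^sup>2 / 2) + (- (t - x))"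
    by (simp add: power2_eq_square algebra_simps)
  then have "exp (- t\<^sup>2 / 2) \<le> exp (1/2 + (- x\<^sup>2 / 2) + (- (t - x)))"
    by (simp only: exp_le_cancel_iff)
  then have "exp (- t\<^sup>2 / 2) \<le> exp (1/2) * exp (- x\<^sup>2 / 2) * exp (- (t - x))"
    by (simp only: exp_add)
  then have "(1 / sqrt (2 * pi)) * exp (- t\<^sup>2 / 2)
      \<le> (1 / sqrt (2 * pi)) * (exp (1/2) * exp (- x\<^sup>2 / 2) * exp (- (t - x)))"
    by (intro mult_left_mono) auto
  then show ?thesis by (simp add: std_normal_density_def algebra_simps)
qed

(* Numerical bound behind the constant 3 in the tail estimate. *)
lemma exp_half_le_2: "exp (1/2 :: real) \<le> 2"
proof -
  have "exp (1/2 :: real) ^ 2 = exp 1" by (simp flip: exp_of_nat_mult)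
  also have "\<dots> \<le> 2 ^ 2" using exp_le by simp
  finally show ?thesis by (rule power2_le_imp_le) simp
qed

(* Tail bound int_x^oo (|t| + 1) phi t dt <= 3 phi x for x >= 0, from the antiderivative
   -phi t - e^(1/2) phi x e^(x - t) of a majorant of the integrand. *)
lemma std_normal_upper_tail:
  assumes x: "x \<ge> 0"
  shows "(LINT t:{x..}|lborel. (\<bar>t\<bar> + 1) * \<phi> t) \<le> 3 * \<phi> x"
proof -
  define c where "c = exp (1/2::real) * \<phi> x"
  define H where "H t = - \<phi> t - c * exp (- (t - x))" for t
  define H' where "H' t = t * \<phi> t + c * exp (- (t - x))" for t
  have "ac_with_deriv H H'"
  proof (rule ac_with_deriv_C1)
    show "(H has_real_derivative H' t) (at t)" for t
      unfolding H_def[abs_def] H'_def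
      by (auto intro!: derivative_eq_intros std_normal_density_deriv[THEN DERIV_cong])
    show "continuous_on UNIV H'"
      unfolding H'_def[abs_def] by (intro continuous_intros std_normal_density_continuous)
  qed
  have integrable: "integrable lborel (\<lambda>t. (\<bar>t\<bar> + 1) * \<phi> t)"
    using std_normal_integrable by (simp add: distrib_right)
  have "(LINT t:{x..b}|lborel. (\<bar>t\<bar> + 1) * \<phi> t) \<le> 3 * \<phi> x" if b: "b \<ge> x" for b
  proof -
    have "(LINT t:{x..b}|lborel. (\<bar>t\<bar> + 1) * \<phi> t) \<le> (LINT t:{x..b}|lborel. H' t)"
    proof (rule set_integral_mono)
      show "set_integrable lborel {x..b} (\<lambda>t. (\<bar>t\<bar> + 1) * \<phi> t)"
        by (rule set_integrable_of_integrable[OF integrable]) simp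
      show "set_integrable lborel {x..b} H'" using \<open>ac_with_deriv H H'\<close> by (rule ac_with_deriv_integrable)
      fix t assume "t \<in> {x..b}"
      then show "(\<bar>t\<bar> + 1) * \<phi> t \<le> H' t"
        using std_normal_density_exp_bound[OF x, of t] x by (simp add: H'_def c_def algebra_simps)
    qed
    also have "\<dots> = H b - H x" using ac_with_deriv_increment[OF \<open>ac_with_deriv H H'\<close> b] by simp
    also have "\<dots> \<le> \<phi> x + c"
    proof -
      have "0 < c * exp (- (b - x))" using std_normal_density_pos[of x] by (simp add: c_def)
      then show ?thesis using std_normal_density_pos[of b] by (simp add: H_def)
    qed
    also have "\<dots> \<le> 3 * \<phi> x"
      using exp_half_le_2 std_normal_density_pos[of x] by (simp add: c_def)
    finally show ?thesis .
  qed
  moreover have "((\<lambda>b. LINT t:{x..b}|lborel. (\<bar>t\<bar> + 1) * \<phi> t)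
      \<longlongrightarrow> (LINT t:{x..}|lborel. (\<bar>t\<bar> + 1) * \<phi> t)) at_top"
    by (intro tendsto_set_lebesgue_integral_at_top set_integrable_of_integrable[OF integrable]) simp_all
  ultimately show ?thesis
    by (intro tendsto_upperbound[where F=at_top]) (auto intro: eventually_mono[OF eventually_ge_at_top[of x]])
qed

lemma std_normal_lower_tail:
  assumes x: "x \<le> 0"
  shows "(LINT t:{..x}|lborel. (\<bar>t\<bar> + 1) * \<phi> t) \<le> 3 * \<phi> x"
proof -
  have "(LINT t:{..x}|lborel. (\<bar>t\<bar> + 1) * \<phi> t) = (LINT t:{-x..}|lborel. (\<bar>t\<bar> + 1) * \<phi> t)"
  proof -
    have "{t. - t \<in> {..x}} = {-x..}" by auto
    then show ?thesis
      using set_integral_reflect[of "{..x}" "\<lambda>t. (\<bar>t\<bar> + 1) * \<phi> t"]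
      by (simp add: std_normal_density_even)
  qed
  also have "\<dots> \<le> 3 * \<phi> (- x)" using x by (intro std_normal_upper_tail) simp
  finally show ?thesis by (simp add: std_normal_density_even)
qed

lemma set_integral_Ioi_Ici:
  fixes f :: "real \<Rightarrow> real"
  assumes "f \<in> borel_measurable lborel"
  shows "(LINT t:{x<..}|lborel. f t) = (LINT t:{x..}|lborel. f t)"
  by (rule set_integral_cong_set)
    (use assms AE_lborel_singleton[of x] in \<open>auto simp: set_borel_measurable_def elim!: eventually_mono\<close>)

lemma ac_with_deriv_upper_tail_integral:
  fixes f :: "real \<Rightarrow> real"
  assumes f: "integrable lborel f"
  shows "ac_with_deriv (\<lambda>x. LINT t:{x<..}|lborel. f t) (\<lambda>t. - f t)"
  unfolding ac_with_deriv_def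
proof (intro conjI allI impI)
  fix a b :: real
  show "set_integrable lborel {a..b} (\<lambda>t. - f t)"
    using f by (intro set_integrable_of_integrable) auto
  assume "a \<le> b"
  then have "{a<..} = {a<..b} \<union> {b<..}" by auto
  moreover have "(LINT t:{a<..b} \<union> {b<..}|lborel. f t) = (LINT t:{a<..b}|lborel. f t) + (LINT t:{b<..}|lborel. f t)"
    by (rule set_integral_Un) (auto intro!: set_integrable_of_integrable[OF f])
  ultimately have "(LINT t:{a<..}|lborel. f t) = (LINT t:{a<..b}|lborel. f t) + (LINT t:{b<..}|lborel. f t)"
    by simp
  moreover have "(LINT t:{a<..b}|lborel. f t) = (LINT t:{a..b}|lborel. f t)"
    using f AE_lborel_singleton[of a]
    by (intro set_integral_cong_set) (auto simp: set_borel_measurable_def elim!: eventually_mono)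
  ultimately show "(LINT t:{b<..}|lborel. f t) - (LINT t:{a<..}|lborel. f t) = (LINT t:{a..b}|lborel. - f t)"
    using set_integral_uminus[OF set_integrable_of_integrable[OF f], of "{a..b}"] by simp
qed

(* For a phi-centred k of linear growth, |int_x^oo k phi| <= 3 phi x: use the upper tail for x >= 0 and,
   thanks to the centring, the lower tail for x < 0. *)
lemma stein_tail_bound:
  fixes k :: "real \<Rightarrow> real"
  assumes km: "k \<in> borel_measurable lborel" and growth: "\<And>t. \<bar>k t\<bar> \<le> \<bar>t\<bar> + 1"
    and centered: "(LINT t|lborel. k t * \<phi> t) = 0"
  shows "\<bar>LINT t:{x<..}|lborel. k t * \<phi> t\<bar> \<le> 3 * \<phi> x"
proof -
  have ib: "integrable lborel (\<lambda>t. (\<bar>t\<bar> + 1) * \<phi> t)"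
    using std_normal_integrable by (simp add: distrib_right)
  have dom: "\<bar>k t * \<phi> t\<bar> \<le> (\<bar>t\<bar> + 1) * \<phi> t" for t
    using growth[of t] std_normal_density_pos[of t] by (simp add: abs_mult mult_right_mono)
  have ik: "integrable lborel (\<lambda>t. k t * \<phi> t)"
    by (rule Bochner_Integration.integrable_bound[OF ib]) (use km dom in auto)
  have tail: "\<bar>LINT t:A|lborel. k t * \<phi> t\<bar> \<le> (LINT t:A|lborel. (\<bar>t\<bar> + 1) * \<phi> t)"
    if "A \<in> sets borel" for A
  proof -
    have "\<bar>LINT t:A|lborel. k t * \<phi> t\<bar> \<le> (LINT t:A|lborel. \<bar>k t * \<phi> t\<bar>)"
      using set_integral_norm_bound[OF set_integrable_of_integrable[OF ik that]] by simp
    also have "\<dots> \<le> (LINT t:A|lborel. (\<bar>t\<bar> + 1) * \<phi> t)"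
      using ik ib that by (intro set_integral_mono set_integrable_of_integrable dom) auto
    finally show ?thesis .
  qed
  show ?thesis
  proof (cases "x \<ge> 0")
    case True
    have "(LINT t:{x<..}|lborel. (\<bar>t\<bar> + 1) * \<phi> t) \<le> 3 * \<phi> x"
      using std_normal_upper_tail[OF True] by (simp add: set_integral_Ioi_Ici)
    then show ?thesis using tail[of "{x<..}"] by simp
  next
    case False
    have "(LINT t:{..x} \<union> {x<..}|lborel. k t * \<phi> t)
        = (LINT t:{..x}|lborel. k t * \<phi> t) + (LINT t:{x<..}|lborel. k t * \<phi> t)"
      by (rule set_integral_Un) (auto intro!: set_integrable_of_integrable[OF ik])
    moreover have "{..x} \<union> {x<..} = UNIV" by auto
    ultimately have "(LINT t:{..x}|lborel. k t * \<phi> t) + (LINT t:{x<..}|lborel. k t * \<phi> t) = 0"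
      using centered by (simp add: set_lebesgue_integral_def)
    then show ?thesis using tail[of "{..x}"] std_normal_lower_tail[of x] False by simp
  qed
qed

lemma stein_solution:
  fixes k :: "real \<Rightarrow> real"
  assumes km: "k \<in> borel_measurable lborel" and growth: "\<And>t. \<bar>k t\<bar> \<le> \<bar>t\<bar> + 1"
    and centered: "(LINT t|lborel. k t * \<phi> t) = 0"
  defines "G \<equiv> \<lambda>x. (LINT t:{x<..}|lborel. k t * \<phi> t) / \<phi> x"
  shows "ac_with_deriv G (\<lambda>x. x * G x - k x)" and "\<bar>G x\<bar> \<le> 3"
proof -
  have "integrable lborel (\<lambda>t. k t * \<phi> t)"
  proof (rule Bochner_Integration.integrable_bound)
    show "integrable lborel (\<lambda>t. (\<bar>t\<bar> + 1) * \<phi> t)"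
      using std_normal_integrable by (simp add: distrib_right)
    show "AE t in lborel. norm (k t * \<phi> t) \<le> norm ((\<bar>t\<bar> + 1) * \<phi> t)"
      using growth std_normal_density_pos by (auto simp: abs_mult intro!: mult_right_mono)
  qed (use km in simp)
  from ac_with_deriv_mult[OF ac_with_deriv_upper_tail_integral[OF this] ac_with_deriv_inverse_std_normal]
  show "ac_with_deriv G (\<lambda>x. x * G x - k x)"
    by (rule ac_with_deriv_cong) (auto simp: G_def std_normal_density_nonzero field_simps)
  show "\<bar>G x\<bar> \<le> 3"
    using stein_tail_bound[OF km growth centered, of x] std_normal_density_pos[of x]
    by (simp add: G_def abs_div pos_divide_le_eq)
qed

lemma abs_mult_bounded_factor:
  fixes f g B :: real
  assumes "\<bar>g\<bar> \<le> B"
  shows "\<bar>f * g\<bar> \<le> B * \<bar>f\<bar>"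
  using mult_left_mono[OF assms abs_ge_zero[of f]] by (simp add: abs_mult mult.commute)

lemma integrable_mult_bounded:
  fixes f g :: "real \<Rightarrow> real"
  assumes f: "integrable lborel f" and gm: "g \<in> borel_measurable lborel" and g_bound: "\<And>x. \<bar>g x\<bar> \<le> B"
  shows "integrable lborel (\<lambda>x. f x * g x)"
proof (rule Bochner_Integration.integrable_bound)
  show "integrable lborel (\<lambda>x. B * \<bar>f x\<bar>)" using f by simp
  show "AE x in lborel. norm (f x * g x) \<le> norm (B * \<bar>f x\<bar>)"
    using abs_mult_bounded_factor[OF g_bound] by (auto intro: order_trans[OF _ abs_ge_self])
qed (use f gm in simp)

(* Stein identity for p: if G' = x G - k with G bounded then int k p = int (p' + x p) G,
   because (p G)' = (p' + x p) G - k p. *)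
lemma stein_integration_by_parts:
  fixes p p' G k :: "real \<Rightarrow> real"
  assumes ip: "integrable lborel p" and ac: "ac_with_deriv p p'"
    and G: "ac_with_deriv G (\<lambda>x. x * G x - k x)" and G_bound: "\<And>x. \<bar>G x\<bar> \<le> B"
    and iw: "integrable lborel (\<lambda>x. p' x + x * p x)" and ikp: "integrable lborel (\<lambda>x. k x * p x)"
  shows "(LINT x|lborel. k x * p x) = (LINT x|lborel. (p' x + x * p x) * G x)"
proof -
  have Gm: "G \<in> borel_measurable borel"
    using ac_with_deriv_continuous[OF G] by (simp add: borel_measurable_continuous_onI)
  have iwG: "integrable lborel (\<lambda>x. (p' x + x * p x) * G x)"
    using integrable_mult_bounded[OF iw _ G_bound] Gm by simp
  have ipG: "integrable lborel (\<lambda>x. p x * G x)"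
    using integrable_mult_bounded[OF ip _ G_bound] Gm by simp
  have "ac_with_deriv (\<lambda>x. p x * G x) (\<lambda>x. (p' x + x * p x) * G x - k x * p x)"
    by (rule ac_with_deriv_cong[OF ac_with_deriv_mult[OF ac G]]) (simp_all add: algebra_simps)
  then have "(LINT x|lborel. (p' x + x * p x) * G x - k x * p x) = 0"
    by (rule integral_of_derivative_zero) (use iwG ikp ipG in simp_all)
  then show ?thesis using iwG ikp by simp
qed

lemma centered_sign_test_function:
  fixes s :: "real \<Rightarrow> real"
  assumes sm: "s \<in> borel_measurable lborel" and s_bound: "\<And>x. \<bar>s x\<bar> \<le> 1"
  defines "c \<equiv> LINT t|lborel. t * s t * \<phi> t"
  shows "integrable lborel (\<lambda>t. t * s t * \<phi> t)" and "\<bar>x * s x - c\<bar> \<le> \<bar>x\<bar> + 1"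
    and "(LINT t|lborel. (t * s t - c) * \<phi> t) = 0"
proof -
  have dom: "\<bar>t * s t * \<phi> t\<bar> \<le> \<bar>t\<bar> * \<phi> t" for t
    using std_normal_density_pos[of t] abs_mult_bounded_factor[OF s_bound, of t]
    by (simp add: abs_mult mult_right_mono)
  show i: "integrable lborel (\<lambda>t. t * s t * \<phi> t)"
    by (rule Bochner_Integration.integrable_bound[OF std_normal_integrable(3)]) (use sm dom in auto)
  have "\<bar>c\<bar> \<le> (LINT t|lborel. \<bar>t * s t * \<phi> t\<bar>)"
    unfolding c_def by (rule integral_abs_bound)
  also have "\<dots> \<le> (LINT t|lborel. \<bar>t\<bar> * \<phi> t)"
    using i by (intro integral_mono[OF _ std_normal_integrable(3) dom]) simp
  finally have "\<bar>c\<bar> \<le> (LINT t|lborel. \<bar>t\<bar> * \<phi> t)" .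
  then have "\<bar>c\<bar> \<le> 1" using std_normal_abs_moment_le_1 by linarith
  moreover have "\<bar>x * s x\<bar> \<le> \<bar>x\<bar>" using abs_mult_bounded_factor[OF s_bound, of x] by simp
  ultimately show "\<bar>x * s x - c\<bar> \<le> \<bar>x\<bar> + 1" by linarith
  have "(LINT t|lborel. (t * s t - c) * \<phi> t) = (LINT t|lborel. t * s t * \<phi> t - c * \<phi> t)"
    by (simp add: algebra_simps)
  also have "\<dots> = 0" using i std_normal_integrable(1) by (simp add: c_def)
  finally show "(LINT t|lborel. (t * s t - c) * \<phi> t) = 0" .
qed

(* With s = sgn (p' + x phi) and
   k = x s - E[Z s Z] one has |p' + x phi| = s w - k p - c p + x s phi pointwise, so that
   int |p' + x phi| = int s w - int k p = int s w - int w G <= (1 + 3) int |w|. *)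
lemma l1_distance_le_score:
  fixes p p' :: "real \<Rightarrow> real"
  assumes nonneg: "\<And>x. p x \<ge> 0" and ip: "integrable lborel p" and total: "(LINT x|lborel. p x) = 1"
    and ac: "ac_with_deriv p p'" and mean_int: "integrable lborel (\<lambda>x. x * p x)"
    and ip': "integrable lborel p'"
  shows "(LINT x|lborel. \<bar>p' x + x * \<phi> x\<bar>) \<le> 4 * (LINT x|lborel. \<bar>p' x + x * p x\<bar>)"
proof -
  define w where "w x = p' x + x * p x" for x
  define s where "s x = sgn (p' x + x * \<phi> x)" for x
  define c where "c = (LINT t|lborel. t * s t * \<phi> t)"
  define k where "k x = x * s x - c" for x
  have p'm: "p' \<in> borel_measurable borel" using ac_with_deriv_measurable[OF ac] by simp
  have sm: "s \<in> borel_measurable lborel" and s_bound: "\<bar>s x\<bar> \<le> 1" for x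
    using p'm by (auto simp: s_def[abs_def] sgn_real_def)
  note test = centered_sign_test_function[OF sm s_bound, folded c_def, folded k_def]
  have km: "k \<in> borel_measurable lborel" using sm by (simp add: k_def[abs_def])
  obtain G where G: "ac_with_deriv G (\<lambda>x. x * G x - k x)" and G_bound: "\<And>x. \<bar>G x\<bar> \<le> 3"
    using stein_solution[OF km test(2) test(3)] by blast
  have iw: "integrable lborel w" using ip' mean_int by (simp add: w_def[abs_def])
  have ikp: "integrable lborel (\<lambda>x. k x * p x)"
  proof (rule Bochner_Integration.integrable_bound)
    show "integrable lborel (\<lambda>x. \<bar>x * p x\<bar> + p x)" using mean_int ip by simp
    show "AE x in lborel. norm (k x * p x) \<le> norm (\<bar>x * p x\<bar> + p x)"
      using mult_right_mono[OF test(2) nonneg] nonneg by (simp add: abs_mult distrib_right)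
  qed (use km ip in simp)
  have isw: "integrable lborel (\<lambda>x. s x * w x)"
    using integrable_mult_bounded[OF iw sm s_bound] by (simp add: mult.commute)
  have iwG: "integrable lborel (\<lambda>x. w x * G x)"
    using ac_with_deriv_continuous[OF G] G_bound
    by (intro integrable_mult_bounded[OF iw]) (auto simp: borel_measurable_continuous_onI)
  have pointwise: "\<bar>p' x + x * \<phi> x\<bar> = s x * w x - k x * p x - c * p x + x * s x * \<phi> x" for x
  proof -
    have "\<bar>p' x + x * \<phi> x\<bar> = s x * (p' x + x * \<phi> x)" by (simp add: s_def sgn_real_def)
    then show ?thesis by (simp add: w_def k_def algebra_simps)
  qed
  have "(LINT x|lborel. \<bar>p' x + x * \<phi> x\<bar>)
      = (LINT x|lborel. s x * w x) - (LINT x|lborel. k x * p x) - c * (LINT x|lborel. p x) + c"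
    unfolding pointwise using isw ikp ip test(1) by (simp add: c_def)
  also have "\<dots> = (LINT x|lborel. s x * w x - w x * G x)"
    using stein_integration_by_parts[OF ip ac G G_bound iw[unfolded w_def] ikp] isw iwG total
    by (simp add: w_def)
  also have "\<dots> \<le> (LINT x|lborel. 4 * \<bar>w x\<bar>)"
  proof (rule integral_mono)
    fix x
    have "\<bar>s x * w x\<bar> \<le> \<bar>w x\<bar>" "\<bar>w x * G x\<bar> \<le> 3 * \<bar>w x\<bar>"
      using abs_mult_bounded_factor[OF s_bound, of "w x" x] abs_mult_bounded_factor[OF G_bound, of "w x" x]
      by (simp_all add: mult.commute)
    then show "s x * w x - w x * G x \<le> 4 * \<bar>w x\<bar>" by linarith
  qed (use iw isw iwG in auto)
  finally show ?thesis by (simp add: w_def)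
qed

(* For a density with int p = int x^2 p = 1: int |p' + x p| <= sqrt (I(X) - 1), since int x p' = -1
   turns the relative Fisher identity into int (p' + x p)^2/p = I(X) - 1. *)
lemma score_l1_bound:
  fixes p p' :: "real \<Rightarrow> real"
  assumes nonneg: "\<And>x. p x \<ge> 0" and ip: "integrable lborel p" and total: "(LINT x|lborel. p x) = 1"
    and ac: "ac_with_deriv p p'" and mean_int: "integrable lborel (\<lambda>x. x * p x)"
    and var_int: "integrable lborel (\<lambda>x. x\<^sup>2 * p x)" and var1: "(LINT x|lborel. x\<^sup>2 * p x) = 1"
    and fisher: "integrable lborel (fisher_density p p')"
  shows "(LINT x|lborel. \<bar>p' x + x * p x\<bar>) \<le> sqrt (fisher_info p p' - 1)"
proof -
  have ip': "integrable lborel p'"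
    using weighted_deriv_integrable[OF nonneg ac fisher, of "\<lambda>_. 1"] ip by simp
  have ixp': "integrable lborel (\<lambda>x. x * p' x)"
    using weighted_deriv_integrable[OF nonneg ac fisher, of "\<lambda>x. x"] var_int by simp
  have score: "(LINT x|lborel. x * p' x) = -1"
    using integral_x_times_deriv[OF ac ip mean_int ixp'] total by simp
  note relative = relative_fisher_identity[OF nonneg ac fisher ixp' var_int]
  have "AE x in lborel. p x = 0 \<longrightarrow> p' x + x * p x = 0"
    using deriv_vanishes_on_zero_set[OF nonneg ac fisher] by eventually_elim simp
  from l1_norm_le_sqrt_fisher_density[OF nonneg ip total _ this relative(1)]
  show ?thesis using relative(2) score var1 ip' mean_int by (simp add: fisher_info_integral)
qed

(* The theorem: the Stein estimate combined with the Fisher information bound on the score defect. *)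
theorem proposition2p4:
  fixes p p' :: "real \<Rightarrow> real"
  assumes nonneg: "\<And>x. p x \<ge> 0"
    and dens_int: "integrable lborel p"
    and dens_total: "(LINT x|lborel. p x) = 1"
    and ac: "ac_with_deriv p p'"
    and mean_int: "integrable lborel (\<lambda>x. x * p x)"
    and mean0: "(LINT x|lborel. x * p x) = 0"
    and var_int: "integrable lborel (\<lambda>x. x\<^sup>2 * p x)"
    and var1: "(LINT x|lborel. x\<^sup>2 * p x) = 1"
    and fisher: "finite_fisher_info p p'"
  shows "integrable lborel (\<lambda>x. p' x - std_normal_density' x) \<and>
         tv_norm (\<lambda>x. p' x - std_normal_density' x) \<le> 4 * sqrt (fisher_info p p' - 1)"
proof -
  have F: "integrable lborel (fisher_density p p')"
    using fisher by (simp add: finite_fisher_info_integrable)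
  have ip': "integrable lborel p'"
    using weighted_deriv_integrable[OF nonneg ac F, of "\<lambda>_. 1"] dens_int by simp
  have "(\<lambda>x. p' x - std_normal_density' x) = (\<lambda>x. p' x + x * \<phi> x)"
    by (simp add: std_normal_density'_def)
  then show ?thesis
    using l1_distance_le_score[OF nonneg dens_int dens_total ac mean_int ip']
      score_l1_bound[OF nonneg dens_int dens_total ac mean_int var_int var1 F]
      ip' std_normal_integrable(2)
    by (simp add: tv_norm_def)
qed

end
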